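(* Let $\theta\ge1$, let $G = (\mu,\mathcal{V},\mathcal{W},\mathcal{E})$ be a non-trivial weighted bipartite graph and let $G'$ be a subgraph of $G$ such that $\mu^{(\theta)}(G')>\mu^{(\theta)}(G)$. Then \[ \delta(G')>\delta(G) \quad\text{and}\quad \frac{\mu^{(\theta')}(G')}{\mu^{(\theta')}(G)} \ge \frac{\mu^{(\theta)}(G')}{\mu^{(\theta)}(G)} >1 \quad\text{for all}\ \theta'\ge\theta. \]
   Context: A weighted bipartite graph is $G=(\mu,\mathcal{V},\mathcal{W},\mathcal{E})$ with $\mu:\mathbb{R}_{>0}\to\mathbb{R}_{>0}$, $\mathcal{V},\mathcal{W}$ finite sets of positive reals, $\mathcal{E}\subseteq\mathcal{V}\times\mathcal{W}$; it is non-trivial if $\mathcal{E}\neq\emptyset$. $\mu(\mathcal{T})=\sum_{t\in\mathcal{T}}\mu(t)$ and $\mu(\mathcal{E})=\sum_{(v,w)\in\mathcal{E}}\mu(v)\mu(w)$. Edge density $\delta(G)=\mu(\mathcal{E})/(\mu(\mathcal{V})\mu(\mathcal{W}))$ if $G$ is non-trivial, else $0$. For $\theta\ge1$, $\mu^{(\theta)}(G)=\delta(G)^\theta\mu(\mathcal{V})\mu(\mathcal{W})$. A subgraph of $G$ is $(\mu,\mathcal{V}',\mathcal{W}',\mathcal{E}')$ with $\mathcal{V}'\subseteq\mathcal{V}$, $\mathcal{W}'\subseteq\mathcal{W}$, $\mathcal{E}'\subseteq\mathcal{E}\cap(\mathcal{V}'\times\mathcal{W}')$. *)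

theory Defs
  imports Complex_Main
begin

type_synonym wbgraph = "(real \<Rightarrow> real) \<times> real set \<times> real set \<times> (real \<times> real) set"

definition wbg_mu :: "wbgraph \<Rightarrow> (real \<Rightarrow> real)" where "wbg_mu G = fst G"
definition wbg_V :: "wbgraph \<Rightarrow> real set" where "wbg_V G = fst (snd G)"
definition wbg_W :: "wbgraph \<Rightarrow> real set" where "wbg_W G = fst (snd (snd G))"
definition wbg_E :: "wbgraph \<Rightarrow> (real \<times> real) set" where "wbg_E G = snd (snd (snd G))"

definition is_wbg :: "wbgraph \<Rightarrow> bool" where
  "is_wbg G \<longleftrightarrow>
     (\<forall>t>0. wbg_mu G t > 0) \<and>
     finite (wbg_V G) \<and> finite (wbg_W G) \<and>
     (\<forall>v\<in>wbg_V G. v > 0) \<and> (\<forall>w\<in>wbg_W G. w > 0) \<and>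
     wbg_E G \<subseteq> wbg_V G \<times> wbg_W G"

definition nontrivial :: "wbgraph \<Rightarrow> bool" where
  "nontrivial G \<longleftrightarrow> wbg_E G \<noteq> {}"

definition mu_set :: "(real \<Rightarrow> real) \<Rightarrow> real set \<Rightarrow> real" where
  "mu_set \<mu> T = (\<Sum>t\<in>T. \<mu> t)"

definition mu_edges :: "(real \<Rightarrow> real) \<Rightarrow> (real \<times> real) set \<Rightarrow> real" where
  "mu_edges \<mu> E = (\<Sum>(v,w)\<in>E. \<mu> v * \<mu> w)"

definition density :: "wbgraph \<Rightarrow> real" where
  "density G = (if nontrivial G
     then mu_edges (wbg_mu G) (wbg_E G) /
          (mu_set (wbg_mu G) (wbg_V G) * mu_set (wbg_mu G) (wbg_W G))
     else 0)"

definition mu_theta :: "real \<Rightarrow> wbgraph \<Rightarrow> real" where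
  "mu_theta \<theta> G = density G powr \<theta> * mu_set (wbg_mu G) (wbg_V G) * mu_set (wbg_mu G) (wbg_W G)"

definition is_subgraph :: "wbgraph \<Rightarrow> wbgraph \<Rightarrow> bool" where
  "is_subgraph G' G \<longleftrightarrow>
     wbg_mu G' = wbg_mu G \<and> wbg_V G' \<subseteq> wbg_V G \<and> wbg_W G' \<subseteq> wbg_W G \<and>
     wbg_E G' \<subseteq> wbg_E G \<inter> (wbg_V G' \<times> wbg_W G')"

end

theory Submission
  imports Defs
begin

text \<open>Write \<open>d = \<delta>(G)\<close>, \<open>a = \<mu>(V) \<mu>(W)\<close>, and \<open>d', a'\<close> for the same quantities of \<open>G'\<close>;
then \<open>\<mu>(\<theta>)(G) = d powr \<theta> * a\<close> and \<open>d a = \<mu>(E)\<close>. A subgraph can only lose edge weight,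
so \<open>d' a' \<le> d a\<close>; if moreover \<open>d' \<le> d\<close>, then
\<open>d' powr \<theta> * a' = d' powr (\<theta> - 1) * (d' a') \<le> d powr (\<theta> - 1) * (d a) = d powr \<theta> * a\<close>.
So a gain in \<open>\<mu>(\<theta>)\<close> forces \<open>d' > d\<close>, and for \<open>\<theta>' \<ge> \<theta>\<close> the ratio of the \<open>\<mu>(\<theta>')\<close>
is the ratio of the \<open>\<mu>(\<theta>)\<close> times \<open>(d'/d) powr (\<theta>' - \<theta>) \<ge> 1\<close>.\<close>

lemma powr_mult_le_powr_mult:
  fixes d d' a a' \<theta> :: real
  assumes "1 \<le> \<theta>" "0 \<le> d'" "d' \<le> d" "0 \<le> a'" "d' * a' \<le> d * a"
  shows "d' powr \<theta> * a' \<le> d powr \<theta> * a"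
proof -
  have split_powr: "x powr \<theta> = x powr (\<theta> - 1) * x" if "0 \<le> x" for x :: real
    using that by (cases "x = 0") (simp_all add: powr_diff)
  have "d' powr (\<theta> - 1) \<le> d powr (\<theta> - 1)"
    using assms by (intro powr_mono2) auto
  then have "d' powr (\<theta> - 1) * (d' * a') \<le> d powr (\<theta> - 1) * (d * a)"
    by (rule mult_mono) (use assms in auto)
  then show ?thesis
    using assms by (simp add: split_powr mult.assoc)
qed

lemma powr_mult_ratio_mono:
  fixes d d' a a' \<theta> t :: real
  assumes "0 < d" "d \<le> d'" "\<theta> \<le> t" "0 < a" "0 \<le> a'"
  shows "d' powr \<theta> * a' / (d powr \<theta> * a) \<le> d' powr t * a' / (d powr t * a)"
proof -
  have "0 < d'" using assms by linarith
  have gain: "1 \<le> d' powr (t - \<theta>) / d powr (t - \<theta>)"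
    using assms by (simp add: powr_mono2)
  have ratio_nonneg: "0 \<le> d' powr \<theta> * a' / (d powr \<theta> * a)"
    using assms by simp
  have "d' powr \<theta> * a' / (d powr \<theta> * a)
      \<le> d' powr \<theta> * a' / (d powr \<theta> * a) * (d' powr (t - \<theta>) / d powr (t - \<theta>))"
    using mult_left_mono[OF gain ratio_nonneg] by simp
  also have "\<dots> = d' powr t * a' / (d powr t * a)"
    using \<open>0 < d\<close> \<open>0 < d'\<close> by (simp add: powr_diff field_simps)
  finally show ?thesis .
qed

definition wbg_mass :: "wbgraph \<Rightarrow> real" where
  "wbg_mass G = mu_set (wbg_mu G) (wbg_V G) * mu_set (wbg_mu G) (wbg_W G)"

lemma mu_theta_eq: "mu_theta \<theta> G = density G powr \<theta> * wbg_mass G"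
  unfolding mu_theta_def wbg_mass_def by simp

lemma is_wbg_subgraph:
  assumes "is_wbg G" "is_subgraph G' G"
  shows "is_wbg G'"
  using assms unfolding is_wbg_def is_subgraph_def by (auto intro: finite_subset)

lemma mu_set_nonneg:
  assumes "\<forall>t>0. \<mu> t > 0" "\<forall>t\<in>T. t > 0"
  shows "0 \<le> mu_set \<mu> T"
  unfolding mu_set_def using assms by (intro sum_nonneg) (simp add: less_imp_le)

lemma mu_set_pos:
  assumes "\<forall>t>0. \<mu> t > 0" "\<forall>t\<in>T. t > 0" "finite T" "T \<noteq> {}"
  shows "0 < mu_set \<mu> T"
  unfolding mu_set_def using assms by (intro sum_pos) auto

lemma wbg_mass_nonneg:
  assumes "is_wbg G"
  shows "0 \<le> wbg_mass G"
  using assms unfolding is_wbg_def wbg_mass_def by (simp add: mu_set_nonneg)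

lemma wbg_mass_pos:
  assumes "is_wbg G" "nontrivial G"
  shows "0 < wbg_mass G"
proof -
  obtain v w where "(v, w) \<in> wbg_E G"
    using assms(2) unfolding nontrivial_def by auto
  then have "wbg_V G \<noteq> {}" "wbg_W G \<noteq> {}"
    using assms(1) unfolding is_wbg_def by auto
  then show ?thesis
    using assms(1) unfolding is_wbg_def wbg_mass_def by (simp add: mu_set_pos)
qed

lemma edge_weight_pos:
  assumes "is_wbg G" "e \<in> wbg_E G"
  shows "0 < (case e of (v, w) \<Rightarrow> wbg_mu G v * wbg_mu G w)"
  using assms unfolding is_wbg_def by (auto split: prod.split)

lemma finite_wbg_E: "is_wbg G \<Longrightarrow> finite (wbg_E G)"
  unfolding is_wbg_def by (meson finite_SigmaI finite_subset)

lemma density_mult_wbg_mass: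
  assumes "is_wbg G"
  shows "density G * wbg_mass G = mu_edges (wbg_mu G) (wbg_E G)"
proof (cases "nontrivial G")
  case True
  then have "density G = mu_edges (wbg_mu G) (wbg_E G) / wbg_mass G"
    by (simp add: density_def wbg_mass_def)
  then show ?thesis
    using wbg_mass_pos[OF assms True] by simp
next
  case False
  then show ?thesis
    by (simp add: density_def nontrivial_def mu_edges_def)
qed

lemma density_nonneg:
  assumes "is_wbg G"
  shows "0 \<le> density G"
proof -
  have "0 \<le> mu_edges (wbg_mu G) (wbg_E G)"
    unfolding mu_edges_def using edge_weight_pos[OF assms] by (intro sum_nonneg) (simp add: less_imp_le)
  then show ?thesis
    using assms unfolding is_wbg_def density_def by (simp add: mu_set_nonneg)
qed

lemma density_pos:
  assumes "is_wbg G" "nontrivial G"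
  shows "0 < density G"
proof -
  have "0 < mu_edges (wbg_mu G) (wbg_E G)"
    unfolding mu_edges_def using assms edge_weight_pos[OF assms(1)] finite_wbg_E[OF assms(1)]
    by (intro sum_pos) (simp_all add: nontrivial_def)
  then show ?thesis
    using density_mult_wbg_mass[OF assms(1)] wbg_mass_pos[OF assms] zero_less_mult_pos2 by metis
qed

lemma mu_edges_subgraph_le:
  assumes "is_wbg G" "is_subgraph G' G"
  shows "mu_edges (wbg_mu G') (wbg_E G') \<le> mu_edges (wbg_mu G) (wbg_E G)"
proof -
  have "wbg_mu G' = wbg_mu G" and sub: "wbg_E G' \<subseteq> wbg_E G"
    using assms(2) unfolding is_subgraph_def by auto
  then show ?thesis
    unfolding mu_edges_def \<open>wbg_mu G' = wbg_mu G\<close> using sub edge_weight_pos[OF assms(1)] finite_wbg_E[OF assms(1)]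
    by (intro sum_mono2) (auto intro: less_imp_le)
qed

theorem lemma5p6:
  fixes \<theta> :: real and G G' :: wbgraph
  assumes "\<theta> \<ge> 1"
    and "is_wbg G" and "nontrivial G"
    and "is_subgraph G' G"
    and "mu_theta \<theta> G' > mu_theta \<theta> G"
  shows "density G' > density G \<and>
         (\<forall>\<theta>'\<ge>\<theta>. mu_theta \<theta>' G' / mu_theta \<theta>' G \<ge> mu_theta \<theta> G' / mu_theta \<theta> G
                  \<and> mu_theta \<theta> G' / mu_theta \<theta> G > 1)"
proof -
  have G': "is_wbg G'" using is_wbg_subgraph assms(2,4) .
  have d: "0 < density G" and a: "0 < wbg_mass G"
    using density_pos wbg_mass_pos assms(2,3) by auto
  have d': "0 \<le> density G'" and a': "0 \<le> wbg_mass G'"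
    using density_nonneg wbg_mass_nonneg G' by auto
  have edges: "density G' * wbg_mass G' \<le> density G * wbg_mass G"
    using mu_edges_subgraph_le assms(2,4) by (simp add: density_mult_wbg_mass G')
  have dens: "density G < density G'"
  proof (rule ccontr)
    assume "\<not> density G < density G'"
    then have "mu_theta \<theta> G' \<le> mu_theta \<theta> G"
      unfolding mu_theta_eq using powr_mult_le_powr_mult assms(1) d' a' edges by simp
    with assms(5) show False by simp
  qed
  have "1 < mu_theta \<theta> G' / mu_theta \<theta> G"
    using assms(5) d a by (simp add: mu_theta_eq)
  moreover have "mu_theta \<theta> G' / mu_theta \<theta> G \<le> mu_theta \<theta>' G' / mu_theta \<theta>' G"
    if "\<theta> \<le> \<theta>'" for \<theta>'
    using powr_mult_ratio_mono[OF d less_imp_le[OF dens] that a a'] by (simp add: mu_theta_eq)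
  ultimately show ?thesis using dens by blast
qed

end
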